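(* Let $X\sim P_X$, teacher partition $(\Omega_k^\star)$ with experts $f_k^\star$, $\mu=\sum_k\mathbf{1}_{\Omega_k^\star}f_k^\star$, $|\mu(X)|\le B$ a.s., $Y=\mu(X)+\xi$ with $\mathbb{E}[\xi\mid X]=0$, $\mathbb{E}\xi^2<\infty$. Let student experts satisfy $\sup_{k,x}|f_k(x;\theta_k)|\le B_{\mathrm{stu}}$ for all parameters considered. Assume there are $\gamma_{\mathrm{gap}}>0$, $\eta_{\mathrm{gap}}\in[0,1)$ such that for every $\theta$ considered there is a permutation $\pi$ with $P_X(\{x\in\Omega_k^\star:(f_j(x;\theta_j)-f_k^\star(x))^2\le\gamma_{\mathrm{gap}}\})\le\eta_{\mathrm{gap}}$ for all $k$ and $j\ne\pi(k)$ (such $\pi$ is an admissible matching for $\theta$). Fix $\varepsilon\in(0,1/2)$ with $2\varepsilon B_{\mathrm{stu}}\le\frac12\sqrt{\gamma_{\mathrm{gap}}}$. Then for all $(\theta,\phi)$, all $\tau>0$ and every admissible matching $\pi$ for $\theta$, \[\mathbb{E}\big[(\mu(X)-h_{\theta,\phi,\tau}(X))^2\mathbf{1}_{\{X\in\mathcal{G}_\varepsilon(\tau;\phi)\}}\big]\ge\frac{\gamma_{\mathrm{gap}}}{4}\max\{P_X(\mathcal{E}_{\mathrm{mis}}(\pi;\theta,\phi,\tau))-K(K-1)\eta_{\mathrm{gap}},0\}.\] Consequently, if $\widetilde L_\tau(\theta,\phi)\le R$ then $P_X(\mathcal{E}_{\mathrm{mis}}(\pi;\theta,\phi,\tau))\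le\frac{4R}{\gamma_{\mathrm{gap}}}+K(K-1)\eta_{\mathrm{gap}}$.
   Context: $p_k^{(\tau)}(x;\phi)=e^{a_k(x;\phi)/\tau}/\sum_je^{a_j(x;\phi)/\tau}$; $h_{\theta,\phi,\tau}=\sum_kp_k^{(\tau)}f_k(\cdot;\theta_k)$; $\widetilde L_\tau(\theta,\phi)=\mathbb{E}[(\mu(X)-h_{\theta,\phi,\tau}(X))^2]$; $\mathcal{G}_\varepsilon(\tau;\phi)=\{x:\max_kp_k^{(\tau)}(x;\phi)>1-\varepsilon\}$; $\mathcal{E}_{\mathrm{mis}}(\pi;\theta,\phi,\tau)=\{x\in\mathcal{X}:x\in\Omega_k^\star\text{ and }p_j^{(\tau)}(x;\phi)\ge1-\varepsilon\text{ for some }k\text{ and some }j\ne\pi(k)\}\cap\mathcal{G}_\varepsilon(\tau;\phi)$. *)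

theory Defs
  imports "HOL-Probability.Probability"
begin

definition teacher_mu :: "nat \<Rightarrow> (nat \<Rightarrow> 'x set) \<Rightarrow> (nat \<Rightarrow> 'x \<Rightarrow> real) \<Rightarrow> 'x \<Rightarrow> real" where
  "teacher_mu K Omega fstar x = (\<Sum>k<K. indicator (Omega k) x * fstar k x)"

text \<open>Tempered softmax gate p_k^(tau)(x;phi), a k phi x = a_k(x;phi).\<close>
definition gate :: "nat \<Rightarrow> (nat \<Rightarrow> 'q \<Rightarrow> 'x \<Rightarrow> real) \<Rightarrow> 'q \<Rightarrow> real \<Rightarrow> nat \<Rightarrow> 'x \<Rightarrow> real" where
  "gate K a phi tau k x = exp (a k phi x / tau) / (\<Sum>j<K. exp (a j phi x / tau))"

text \<open>Student mixture h_{theta,phi,tau}; f k t x = f_k(x;t), theta k = theta_k.\<close>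
definition student_h :: "nat \<Rightarrow> (nat \<Rightarrow> 'p \<Rightarrow> 'x \<Rightarrow> real) \<Rightarrow> (nat \<Rightarrow> 'p) \<Rightarrow>
    (nat \<Rightarrow> 'q \<Rightarrow> 'x \<Rightarrow> real) \<Rightarrow> 'q \<Rightarrow> real \<Rightarrow> 'x \<Rightarrow> real" where
  "student_h K f theta a phi tau x = (\<Sum>k<K. gate K a phi tau k x * f k (theta k) x)"

definition confident_region :: "'x measure \<Rightarrow> nat \<Rightarrow> (nat \<Rightarrow> 'q \<Rightarrow> 'x \<Rightarrow> real) \<Rightarrow> 'q \<Rightarrow> real \<Rightarrow> real \<Rightarrow> 'x set" where
  "confident_region N K a phi tau eps =
     {x \<in> space N. Max ((\<lambda>k. gate K a phi tau k x) ` {..<K}) > 1 - eps}"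

definition mis_event :: "'x measure \<Rightarrow> nat \<Rightarrow> (nat \<Rightarrow> 'x set) \<Rightarrow> (nat \<Rightarrow> nat) \<Rightarrow>
    (nat \<Rightarrow> 'q \<Rightarrow> 'x \<Rightarrow> real) \<Rightarrow> 'q \<Rightarrow> real \<Rightarrow> real \<Rightarrow> 'x set" where
  "mis_event N K Omega pm a phi tau eps =
     {x \<in> space N. \<exists>k<K. \<exists>j<K. x \<in> Omega k \<and> j \<noteq> pm k \<and> gate K a phi tau j x \<ge> 1 - eps}
     \<inter> confident_region N K a phi tau eps"

definition admissible_matching :: "'x measure \<Rightarrow> nat \<Rightarrow> (nat \<Rightarrow> 'x set) \<Rightarrow> (nat \<Rightarrow> 'x \<Rightarrow> real) \<Rightarrow>
    (nat \<Rightarrow> 'p \<Rightarrow> 'x \<Rightarrow> real) \<Rightarrow> real \<Rightarrow> real \<Rightarrow> (nat \<Rightarrow> 'p) \<Rightarrow> (nat \<Rightarrow> nat) \<Rightarrow> bool" where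
  "admissible_matching PX K Omega fstar f gamma eta theta pm \<longleftrightarrow>
     pm permutes {..<K} \<and>
     (\<forall>k<K. \<forall>j<K. j \<noteq> pm k \<longrightarrow>
        measure PX {x \<in> Omega k. (f j (theta j) x - fstar k x)\<^sup>2 \<le> gamma} \<le> eta)"

end

theory Submission
  imports Defs
begin

(* Take x in the misrouting event, say x in Omega k with gate mass at least 1 - eps on an
   expert j \<noteq> pm k. Since the gate is a probability vector, h(x) lies within 2 eps Bstu
   \<le> sqrt gamma / 2 of f_j(x). Unless x lies in the exceptional set where some wrong expert
   comes within squared distance gamma of f_k^*, we have |f_j(x) - mu(x)| > sqrt gamma, hence
   (mu(x) - h(x))^2 \<ge> gamma / 4 on the confident region. Markov's inequality bounds the
   probability of the misrouting event off the exceptional set by 4/gamma times the confident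
   loss, and the union bound over the K(K-1) pairs (k, j) bounds the exceptional set by
   K(K-1) eta. *)

lemma gate_pos: "0 < K \<Longrightarrow> 0 < gate K a phi tau k x"
  unfolding gate_def by (intro divide_pos_pos exp_gt_zero sum_pos) auto

lemma sum_gate: "0 < K \<Longrightarrow> (\<Sum>k<K. gate K a phi tau k x) = 1"
proof -
  assume "0 < K"
  then have "0 < (\<Sum>j<K. exp (a j phi x / tau))" by (intro sum_pos) auto
  then show ?thesis unfolding gate_def by (simp add: sum_divide_distrib[symmetric])
qed

lemma convex_sum_abs_le:
  fixes p F :: "'i \<Rightarrow> real"
  assumes "\<And>i. i \<in> I \<Longrightarrow> 0 \<le> p i" "sum p I = 1" "\<And>i. i \<in> I \<Longrightarrow> \<bar>F i\<bar> \<le> C"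
  shows "\<bar>\<Sum>i\<in>I. p i * F i\<bar> \<le> C"
proof -
  have "\<bar>\<Sum>i\<in>I. p i * F i\<bar> \<le> (\<Sum>i\<in>I. p i * C)"
    using assms(1,3) by (intro order.trans[OF sum_abs] sum_mono) (auto simp: abs_mult mult_left_mono)
  also have "\<dots> = C" using assms(2) by (simp add: sum_distrib_right[symmetric])
  finally show ?thesis .
qed

lemma convex_sum_near_vertex:
  fixes p F :: "'i \<Rightarrow> real"
  assumes p_nonneg: "\<And>i. i \<in> I \<Longrightarrow> 0 \<le> p i" and p_sum: "sum p I = 1"
    and j: "j \<in> I" "1 - e \<le> p j" and F_bdd: "\<And>i. i \<in> I \<Longrightarrow> \<bar>F i\<bar> \<le> C"
  shows "\<bar>(\<Sum>i\<in>I. p i * F i) - F j\<bar> \<le> 2 * e * C"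
proof -
  have I: "finite I" using p_sum by (metis sum.infinite zero_neq_one)
  have "(\<Sum>i\<in>I. p i * F i) - F j = (\<Sum>i\<in>I. p i * (F i - F j))"
    using p_sum by (simp add: right_diff_distrib sum_subtractf sum_distrib_right[symmetric])
  also have "\<dots> = (\<Sum>i\<in>I - {j}. p i * (F i - F j))"
    using I j by (simp add: sum_diff1)
  also have "\<bar>\<dots>\<bar> \<le> (\<Sum>i\<in>I - {j}. p i * (2 * C))"
  proof (intro order.trans[OF sum_abs] sum_mono)
    fix i assume "i \<in> I - {j}"
    moreover have "\<bar>F i - F j\<bar> \<le> 2 * C" if "i \<in> I"
      using F_bdd[OF that] F_bdd[OF j(1)] by linarith
    ultimately show "\<bar>p i * (F i - F j)\<bar> \<le> p i * (2 * C)"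
      using p_nonneg by (auto simp: abs_mult mult_left_mono)
  qed
  also have "\<dots> = 2 * C * (1 - p j)"
    using I j p_sum by (simp add: sum_distrib_right[symmetric] sum_diff1 mult.commute)
  also have "\<dots> \<le> 2 * e * C"
    using F_bdd[OF j(1)] j(2) by (simp add: mult_left_mono mult.commute)
  finally show ?thesis .
qed

lemma student_h_abs_le:
  assumes "0 < K" "\<And>k. k < K \<Longrightarrow> \<bar>f k (theta k) x\<bar> \<le> C"
  shows "\<bar>student_h K f theta a phi tau x\<bar> \<le> C"
  unfolding student_h_def using assms
  by (intro convex_sum_abs_le) (auto simp: sum_gate less_imp_le[OF gate_pos])

lemma student_h_near_expert:
  assumes "0 < K" "j < K" "1 - eps \<le> gate K a phi tau j x" "\<And>k. k < K \<Longrightarrow> \<bar>f k (theta k) x\<bar> \<le> C"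
  shows "\<bar>student_h K f theta a phi tau x - f j (theta j) x\<bar> \<le> 2 * eps * C"
  unfolding student_h_def using assms
  by (intro convex_sum_near_vertex[where p = "\<lambda>k. gate K a phi tau k x"])
     (auto simp: sum_gate less_imp_le[OF gate_pos])

lemma teacher_mu_on_cell:
  assumes "disjoint_family_on Omega {..<K}" "k < K" "x \<in> Omega k"
  shows "teacher_mu K Omega fstar x = fstar k x"
proof -
  have "x \<notin> Omega i" if "i < K" "i \<noteq> k" for i
    using assms that unfolding disjoint_family_on_def by auto
  then have "teacher_mu K Omega fstar x = (\<Sum>i\<in>{k}. indicator (Omega i) x * fstar i x)"
    unfolding teacher_mu_def using assms(2) by (intro sum.mono_neutral_right) auto
  then show ?thesis using assms(3) by simp
qed

lemma quarter_gap_le_sq_diff: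
  fixes u v w gamma :: real
  assumes "gamma < (u - v)\<^sup>2" "\<bar>w - u\<bar> \<le> sqrt gamma / 2"
  shows "gamma / 4 \<le> (v - w)\<^sup>2"
proof -
  have "0 \<le> sqrt gamma" using assms(2) abs_ge_zero[of "w - u"] by linarith
  then have "0 \<le> gamma" by simp
  have "sqrt gamma < \<bar>u - v\<bar>" using real_sqrt_less_mono[OF assms(1)] by simp
  then have "sqrt gamma / 2 \<le> \<bar>v - w\<bar>" using assms(2) by linarith
  from power_mono[OF this, of 2] \<open>0 \<le> gamma\<close> show ?thesis
    by (simp add: power_divide)
qed

definition gap_violation :: "nat \<Rightarrow> (nat \<Rightarrow> 'x set) \<Rightarrow> (nat \<Rightarrow> 'x \<Rightarrow> real) \<Rightarrow>
    (nat \<Rightarrow> 'p \<Rightarrow> 'x \<Rightarrow> real) \<Rightarrow> real \<Rightarrow> (nat \<Rightarrow> 'p) \<Rightarrow> (nat \<Rightarrow> nat) \<Rightarrow> 'x set" where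
  "gap_violation K Omega fstar f gamma theta pm =
     (\<Union>k<K. \<Union>j\<in>{..<K} - {pm k}. {x \<in> Omega k. (f j (theta j) x - fstar k x)\<^sup>2 \<le> gamma})"

lemma borel_measurable_teacher_mu:
  assumes "\<And>k. k < K \<Longrightarrow> Omega k \<in> sets N" "\<And>k. k < K \<Longrightarrow> fstar k \<in> borel_measurable N"
  shows "teacher_mu K Omega fstar \<in> borel_measurable N"
  unfolding teacher_mu_def using assms by measurable

lemma borel_measurable_gate:
  assumes "\<And>k. k < K \<Longrightarrow> a k phi \<in> borel_measurable N" "k < K"
  shows "gate K a phi tau k \<in> borel_measurable N"
  unfolding gate_def using assms by measurable

lemma borel_measurable_student_h:
  assumes "\<And>k. k < K \<Longrightarrow> a k phi \<in> borel_measurable N"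
    "\<And>k. k < K \<Longrightarrow> f k (theta k) \<in> borel_measurable N"
  shows "student_h K f theta a phi tau \<in> borel_measurable N"
  unfolding student_h_def
  using assms borel_measurable_gate[where a = a and phi = phi, OF assms(1)] by measurable

lemma confident_region_eq:
  assumes "0 < K"
  shows "confident_region N K a phi tau eps = {x \<in> space N. \<exists>k<K. 1 - eps < gate K a phi tau k x}"
proof -
  have "1 - eps < Max ((\<lambda>k. gate K a phi tau k x) ` {..<K}) \<longleftrightarrow> (\<exists>k<K. 1 - eps < gate K a phi tau k x)"
    for x using assms by (subst Max_gr_iff) auto
  then show ?thesis unfolding confident_region_def by blast
qed

lemma sets_confident_region:
  assumes "0 < K" "\<And>k. k < K \<Longrightarrow> a k phi \<in> borel_measurable N"
  shows "confident_region N K a phi tau eps \<in> sets N"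
  unfolding confident_region_eq[OF assms(1)]
  using borel_measurable_gate[where a = a and phi = phi, OF assms(2)] by measurable

lemma sets_mis_event:
  assumes "0 < K" "\<And>k. k < K \<Longrightarrow> Omega k \<in> sets N" "\<And>k. k < K \<Longrightarrow> a k phi \<in> borel_measurable N"
  shows "mis_event N K Omega pm a phi tau eps \<in> sets N"
  unfolding mis_event_def
  using assms sets_confident_region[where a = a and phi = phi, OF assms(1,3)]
    borel_measurable_gate[where a = a and phi = phi, OF assms(3)]
  by measurable

lemma sets_gap_violation:
  assumes "\<And>k. k < K \<Longrightarrow> Omega k \<in> sets N" "\<And>k. k < K \<Longrightarrow> fstar k \<in> borel_measurable N"
    "\<And>k. k < K \<Longrightarrow> f k (theta k) \<in> borel_measurable N"
  shows "gap_violation K Omega fstar f gamma theta pm \<in> sets N"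
  unfolding gap_violation_def using assms by measurable

lemma sq_error_ge_on_mis_event:
  assumes "0 < K" "disjoint_family_on Omega {..<K}"
    and f_bdd: "\<And>k. k < K \<Longrightarrow> \<bar>f k (theta k) x\<bar> \<le> C" and eps_gap: "2 * eps * C \<le> 1/2 * sqrt gamma"
    and x: "x \<in> mis_event N K Omega pm a phi tau eps" "x \<notin> gap_violation K Omega fstar f gamma theta pm"
  shows "gamma / 4 \<le> (teacher_mu K Omega fstar x - student_h K f theta a phi tau x)\<^sup>2
                        * indicator (confident_region N K a phi tau eps) x"
proof -
  obtain k j where kj: "k < K" "j < K" "x \<in> Omega k" "j \<noteq> pm k" "1 - eps \<le> gate K a phi tau j x"
    and confident: "x \<in> confident_region N K a phi tau eps"
    using x(1) unfolding mis_event_def by blast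
  have "gamma < (f j (theta j) x - fstar k x)\<^sup>2"
    using x(2) kj unfolding gap_violation_def by (force simp: not_le)
  moreover have "\<bar>student_h K f theta a phi tau x - f j (theta j) x\<bar> \<le> sqrt gamma / 2"
  proof -
    have "\<bar>student_h K f theta a phi tau x - f j (theta j) x\<bar> \<le> 2 * eps * C"
      by (rule student_h_near_expert) (use assms kj in auto)
    then show ?thesis using eps_gap by linarith
  qed
  ultimately have "gamma / 4 \<le> (fstar k x - student_h K f theta a phi tau x)\<^sup>2"
    by (rule quarter_gap_le_sq_diff)
  then show ?thesis
    using teacher_mu_on_cell[OF assms(2) kj(1,3)] confident by simp
qed

lemma measure_gap_violation_le:
  assumes adm: "admissible_matching P K Omega fstar f gamma eta theta pm" and "sets P = sets N"
    and "\<And>k. k < K \<Longrightarrow> Omega k \<in> sets N" "\<And>k. k < K \<Longrightarrow> fstar k \<in> borel_measurable N"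
    and "\<And>k. k < K \<Longrightarrow> f k (theta k) \<in> borel_measurable N"
  shows "measure P (gap_violation K Omega fstar f gamma theta pm) \<le> real K * (real K - 1) * eta"
proof -
  let ?V = "\<lambda>k j. {x \<in> Omega k. (f j (theta j) x - fstar k x)\<^sup>2 \<le> gamma}"
  have V_sets: "?V k j \<in> sets P" if "k < K" "j < K" for k j
    using assms(2-5) that by measurable
  have "measure P (gap_violation K Omega fstar f gamma theta pm)
      \<le> (\<Sum>k<K. measure P (\<Union>j\<in>{..<K} - {pm k}. ?V k j))"
    unfolding gap_violation_def using V_sets by (intro measure_UNION_le) auto
  also have "\<dots> \<le> (\<Sum>k<K. \<Sum>j\<in>{..<K} - {pm k}. measure P (?V k j))"
    using V_sets by (intro sum_mono measure_UNION_le) auto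
  also have "\<dots> \<le> (\<Sum>k<K. \<Sum>j\<in>{..<K} - {pm k}. eta)"
    using adm unfolding admissible_matching_def by (intro sum_mono) auto
  also have "\<dots> = (\<Sum>k<K. real (K - 1) * eta)"
    using adm permutes_in_image[of pm "{..<K}"] unfolding admissible_matching_def by simp
  also have "\<dots> = real K * (real K - 1) * eta"
    by (cases K) auto
  finally show ?thesis .
qed

lemma measure_le_Markov_plus_exceptional:
  fixes u :: "'a \<Rightarrow> real"
  assumes "finite_measure P" "integrable P u" "AE x in P. 0 \<le> u x" "0 < c"
    and "A \<in> sets P" "Z \<in> sets P" "\<And>x. x \<in> A \<Longrightarrow> x \<notin> Z \<Longrightarrow> c \<le> u x"
  shows "measure P A \<le> (\<integral>x. u x \<partial>P) / c + measure P Z"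
proof -
  let ?L = "{x \<in> space P. c \<le> u x}"
  have [measurable]: "u \<in> borel_measurable P" using assms(2) by simp
  have "A \<subseteq> ?L \<union> Z" using assms(5,7) sets.sets_into_space by blast
  then have "measure P A \<le> measure P (?L \<union> Z)"
    using assms(1,6) by (intro finite_measure.finite_measure_mono) auto
  also have "\<dots> \<le> measure P ?L + measure P Z"
    using assms(6) by (intro measure_Un_le) auto
  also have "measure P ?L \<le> (\<integral>x. u x \<partial>P) / c"
    using assms(2-4) by (intro integral_Markov_inequality_measure[where A = "space P"]) auto
  finally show ?thesis by simp
qed

lemma confident_sq_error_lower_bound:
  assumes P: "finite_measure P" "sets P = sets N" and "0 < K"
    and Omega: "\<And>k. k < K \<Longrightarrow> Omega k \<in> sets N" "disjoint_family_on Omega {..<K}"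
    and meas: "\<And>k. k < K \<Longrightarrow> fstar k \<in> borel_measurable N"
      "\<And>k. k < K \<Longrightarrow> f k (theta k) \<in> borel_measurable N"
      "\<And>k. k < K \<Longrightarrow> a k phi \<in> borel_measurable N"
    and f_bdd: "\<And>k x. k < K \<Longrightarrow> x \<in> space N \<Longrightarrow> \<bar>f k (theta k) x\<bar> \<le> C"
    and "0 < gamma" "2 * eps * C \<le> 1/2 * sqrt gamma"
    and adm: "admissible_matching P K Omega fstar f gamma eta theta pm"
    and int: "integrable P (\<lambda>x. (teacher_mu K Omega fstar x - student_h K f theta a phi tau x)\<^sup>2
                                  * indicator (confident_region N K a phi tau eps) x)"
  shows "gamma / 4 * (measure P (mis_event N K Omega pm a phi tau eps) - real K * (real K - 1) * eta)
     \<le> (\<integral>x. (teacher_mu K Omega fstar x - student_h K f theta a phi tau x)\<^sup>2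
             * indicator (confident_region N K a phi tau eps) x \<partial>P)"
    (is "gamma / 4 * (measure P ?E - ?c) \<le> integral\<^sup>L P ?u")
proof -
  let ?Z = "gap_violation K Omega fstar f gamma theta pm"
  have "?E \<in> sets N" by (rule sets_mis_event) (use assms in auto)
  moreover have "?Z \<in> sets N" by (rule sets_gap_violation) (use assms in auto)
  ultimately have "?E \<in> sets P" "?Z \<in> sets P" using P(2) by auto
  moreover have "gamma / 4 \<le> ?u x" if "x \<in> ?E" "x \<notin> ?Z" for x
  proof -
    have "x \<in> space N" using that(1) unfolding mis_event_def by blast
    show ?thesis by (rule sq_error_ge_on_mis_event) (use assms that \<open>x \<in> space N\<close> in auto)
  qed
  ultimately have "measure P ?E \<le> integral\<^sup>L P ?u / (gamma / 4) + measure P ?Z"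
    using P(1) int \<open>0 < gamma\<close> by (intro measure_le_Markov_plus_exceptional) auto
  also have "measure P ?Z \<le> ?c"
    using measure_gap_violation_le[OF adm P(2) Omega(1) meas(1,2)] .
  finally show ?thesis
    using \<open>0 < gamma\<close> by (simp add: field_simps)
qed

lemma AE_sq_error_le:
  assumes X: "X \<in> measurable M N" and "0 < K"
    and f_bdd: "\<And>k x. k < K \<Longrightarrow> x \<in> space N \<Longrightarrow> \<bar>f k (theta k) x\<bar> \<le> C"
    and mu_bdd: "AE w in M. \<bar>teacher_mu K Omega fstar (X w)\<bar> \<le> B"
  shows "AE w in M. (teacher_mu K Omega fstar (X w) - student_h K f theta a phi tau (X w))\<^sup>2 \<le> (B + C)\<^sup>2"
  using mu_bdd AE_space
proof eventually_elim
  case (elim w)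
  then have "X w \<in> space N" using measurable_space[OF X] by blast
  then have "\<bar>student_h K f theta a phi tau (X w)\<bar> \<le> C"
    using f_bdd \<open>0 < K\<close> by (intro student_h_abs_le) auto
  then have "\<bar>teacher_mu K Omega fstar (X w) - student_h K f theta a phi tau (X w)\<bar> \<le> \<bar>B + C\<bar>"
    using elim by linarith
  then show ?case by (simp add: abs_le_square_iff)
qed

lemma integrable_sq_error_indicator:
  assumes M: "finite_measure M" and X: "X \<in> measurable M N" and "0 < K"
    and meas: "\<And>k. k < K \<Longrightarrow> Omega k \<in> sets N" "\<And>k. k < K \<Longrightarrow> fstar k \<in> borel_measurable N"
      "\<And>k. k < K \<Longrightarrow> f k (theta k) \<in> borel_measurable N"
      "\<And>k. k < K \<Longrightarrow> a k phi \<in> borel_measurable N"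
    and f_bdd: "\<And>k x. k < K \<Longrightarrow> x \<in> space N \<Longrightarrow> \<bar>f k (theta k) x\<bar> \<le> C"
    and mu_bdd: "AE w in M. \<bar>teacher_mu K Omega fstar (X w)\<bar> \<le> B"
    and S: "S \<in> sets N"
  shows "integrable M (\<lambda>w. (teacher_mu K Omega fstar (X w) - student_h K f theta a phi tau (X w))\<^sup>2
                            * indicator S (X w))"
proof -
  have [measurable]: "teacher_mu K Omega fstar \<in> borel_measurable N"
    by (rule borel_measurable_teacher_mu) (use meas in auto)
  have [measurable]: "student_h K f theta a phi tau \<in> borel_measurable N"
    by (rule borel_measurable_student_h) (use meas in auto)
  note [measurable] = X S
  have "AE w in M. (teacher_mu K Omega fstar (X w) - student_h K f theta a phi tau (X w))\<^sup>2 \<le> (B + C)\<^sup>2"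
    by (rule AE_sq_error_le[OF X]) (use assms in auto)
  then show ?thesis
    using M by (intro finite_measure.integrable_const_bound[where B = "(B + C)\<^sup>2"])
      (auto simp: indicator_def)
qed

lemma integrable_sq_error:
  assumes M: "finite_measure M" and X: "X \<in> measurable M N" and "0 < K"
    and meas: "\<And>k. k < K \<Longrightarrow> Omega k \<in> sets N" "\<And>k. k < K \<Longrightarrow> fstar k \<in> borel_measurable N"
      "\<And>k. k < K \<Longrightarrow> f k (theta k) \<in> borel_measurable N"
      "\<And>k. k < K \<Longrightarrow> a k phi \<in> borel_measurable N"
    and f_bdd: "\<And>k x. k < K \<Longrightarrow> x \<in> space N \<Longrightarrow> \<bar>f k (theta k) x\<bar> \<le> C"
    and mu_bdd: "AE w in M. \<bar>teacher_mu K Omega fstar (X w)\<bar> \<le> B"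
  shows "integrable M (\<lambda>w. (teacher_mu K Omega fstar (X w) - student_h K f theta a phi tau (X w))\<^sup>2)"
proof -
  have int: "integrable M (\<lambda>w. (teacher_mu K Omega fstar (X w) - student_h K f theta a phi tau (X w))\<^sup>2
                                 * indicator (space N) (X w))"
    by (rule integrable_sq_error_indicator[OF M X]) (use assms in auto)
  show ?thesis
    by (rule Bochner_Integration.integrable_cong[THEN iffD1, OF refl _ int])
      (use measurable_space[OF X] in auto)
qed

lemma confident_sq_error_lower_bound_distr:
  assumes M: "finite_measure M" and X: "X \<in> measurable M N" and "0 < K"
    and Omega: "\<And>k. k < K \<Longrightarrow> Omega k \<in> sets N" "disjoint_family_on Omega {..<K}"
    and meas: "\<And>k. k < K \<Longrightarrow> fstar k \<in> borel_measurable N"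
      "\<And>k. k < K \<Longrightarrow> f k (theta k) \<in> borel_measurable N"
      "\<And>k. k < K \<Longrightarrow> a k phi \<in> borel_measurable N"
    and f_bdd: "\<And>k x. k < K \<Longrightarrow> x \<in> space N \<Longrightarrow> \<bar>f k (theta k) x\<bar> \<le> C"
    and mu_bdd: "AE w in M. \<bar>teacher_mu K Omega fstar (X w)\<bar> \<le> B"
    and "0 < gamma" "2 * eps * C \<le> 1/2 * sqrt gamma"
    and adm: "admissible_matching (distr M N X) K Omega fstar f gamma eta theta pm"
  shows "gamma / 4 * (measure (distr M N X) (mis_event N K Omega pm a phi tau eps) - real K * (real K - 1) * eta)
     \<le> (\<integral>w. (teacher_mu K Omega fstar (X w) - student_h K f theta a phi tau (X w))\<^sup>2
             * indicator (confident_region N K a phi tau eps) (X w) \<partial>M)"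
proof -
  let ?G = "confident_region N K a phi tau eps"
  let ?u = "\<lambda>x. (teacher_mu K Omega fstar x - student_h K f theta a phi tau x)\<^sup>2 * indicator ?G x"
  have "?G \<in> sets N" by (rule sets_confident_region) (use assms in auto)
  have [measurable]: "teacher_mu K Omega fstar \<in> borel_measurable N"
    by (rule borel_measurable_teacher_mu) (use assms in auto)
  have [measurable]: "student_h K f theta a phi tau \<in> borel_measurable N"
    by (rule borel_measurable_student_h) (use assms in auto)
  note [measurable] = X \<open>?G \<in> sets N\<close>
  have "integrable M (\<lambda>w. ?u (X w))"
    by (rule integrable_sq_error_indicator[OF M X]) (use assms \<open>?G \<in> sets N\<close> in auto)
  then have "integrable (distr M N X) ?u"
    by (simp add: integrable_distr_eq)
  then have "gamma / 4 * (measure (distr M N X) (mis_event N K Omega pm a phi tau eps) - real K * (real K - 1) * eta)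
      \<le> integral\<^sup>L (distr M N X) ?u"
    by (intro confident_sq_error_lower_bound[where C = C])
      (use assms finite_measure.finite_measure_distr[OF M X] in auto)
  also have "\<dots> = (\<integral>w. ?u (X w) \<partial>M)"
    by (rule integral_distr) auto
  finally show ?thesis .
qed

lemma confident_sq_error_le_sq_error:
  assumes M: "finite_measure M" and X: "X \<in> measurable M N" and "0 < K"
    and meas: "\<And>k. k < K \<Longrightarrow> Omega k \<in> sets N" "\<And>k. k < K \<Longrightarrow> fstar k \<in> borel_measurable N"
      "\<And>k. k < K \<Longrightarrow> f k (theta k) \<in> borel_measurable N"
      "\<And>k. k < K \<Longrightarrow> a k phi \<in> borel_measurable N"
    and f_bdd: "\<And>k x. k < K \<Longrightarrow> x \<in> space N \<Longrightarrow> \<bar>f k (theta k) x\<bar> \<le> C"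
    and mu_bdd: "AE w in M. \<bar>teacher_mu K Omega fstar (X w)\<bar> \<le> B"
    and S: "S \<in> sets N"
  shows "(\<integral>w. (teacher_mu K Omega fstar (X w) - student_h K f theta a phi tau (X w))\<^sup>2 * indicator S (X w) \<partial>M)
     \<le> (\<integral>w. (teacher_mu K Omega fstar (X w) - student_h K f theta a phi tau (X w))\<^sup>2 \<partial>M)"
proof (rule integral_mono)
  show "integrable M (\<lambda>w. (teacher_mu K Omega fstar (X w) - student_h K f theta a phi tau (X w))\<^sup>2
                            * indicator S (X w))"
    by (rule integrable_sq_error_indicator[OF M X]) (use assms in auto)
  show "integrable M (\<lambda>w. (teacher_mu K Omega fstar (X w) - student_h K f theta a phi tau (X w))\<^sup>2)"
    by (rule integrable_sq_error[OF M X]) (use assms in auto)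
qed (simp add: indicator_def)

theorem mainTheorem12:
  fixes M :: "'w measure" and N :: "'x measure"
    and X :: "'w \<Rightarrow> 'x" and xi Y :: "'w \<Rightarrow> real"
    and K :: nat and Omega :: "nat \<Rightarrow> 'x set" and fstar :: "nat \<Rightarrow> 'x \<Rightarrow> real"
    and f :: "nat \<Rightarrow> 'p \<Rightarrow> 'x \<Rightarrow> real" and a :: "nat \<Rightarrow> 'q \<Rightarrow> 'x \<Rightarrow> real"
    and Theta :: "(nat \<Rightarrow> 'p) set" and Phi :: "'q set"
    and B Bstu gamma eta eps :: real
  assumes PM: "prob_space M"
    and X_meas: "X \<in> measurable M N"
    and K_pos: "K \<ge> 1"
    and Omega_meas: "\<And>k. k < K \<Longrightarrow> Omega k \<in> sets N"
    and Omega_disj: "disjoint_family_on Omega {..<K}"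
    and Omega_cover: "(\<Union>k<K. Omega k) = space N"
    and fstar_meas: "\<And>k. k < K \<Longrightarrow> fstar k \<in> borel_measurable N"
    and mu_bdd: "AE w in M. \<bar>teacher_mu K Omega fstar (X w)\<bar> \<le> B"
    and xi_meas: "xi \<in> borel_measurable M"
    and Y_def: "\<And>w. Y w = teacher_mu K Omega fstar (X w) + xi w"
    and xi_cond: "AE w in M. real_cond_exp M (vimage_algebra (space M) X N) xi w = 0"
    and xi_sq: "integrable M (\<lambda>w. (xi w)\<^sup>2)"
    and f_meas: "\<And>theta k. theta \<in> Theta \<Longrightarrow> k < K \<Longrightarrow> f k (theta k) \<in> borel_measurable N"
    and a_meas: "\<And>phi k. phi \<in> Phi \<Longrightarrow> k < K \<Longrightarrow> a k phi \<in> borel_measurable N"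
    and f_bdd: "\<And>theta k x. theta \<in> Theta \<Longrightarrow> k < K \<Longrightarrow> x \<in> space N \<Longrightarrow> \<bar>f k (theta k) x\<bar> \<le> Bstu"
    and gamma_pos: "gamma > 0"
    and eta_rng: "0 \<le> eta" "eta < 1"
    and gap: "\<And>theta. theta \<in> Theta \<Longrightarrow>
               \<exists>pm. admissible_matching (distr M N X) K Omega fstar f gamma eta theta pm"
    and eps_rng: "0 < eps" "eps < 1/2"
    and eps_gap: "2 * eps * Bstu \<le> 1/2 * sqrt gamma"
  shows "\<forall>theta\<in>Theta. \<forall>phi\<in>Phi. \<forall>tau>0. \<forall>pm.
           admissible_matching (distr M N X) K Omega fstar f gamma eta theta pm \<longrightarrow>
           ((\<integral>w. (teacher_mu K Omega fstar (X w) - student_h K f theta a phi tau (X w))\<^sup>2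
                  * indicator (confident_region N K a phi tau eps) (X w) \<partial>M)
              \<ge> gamma / 4 * max (measure (distr M N X) (mis_event N K Omega pm a phi tau eps)
                                   - real K * (real K - 1) * eta) 0)
           \<and> (\<forall>R::real.
               (\<integral>w. (teacher_mu K Omega fstar (X w) - student_h K f theta a phi tau (X w))\<^sup>2 \<partial>M) \<le> R
               \<longrightarrow> measure (distr M N X) (mis_event N K Omega pm a phi tau eps)
                     \<le> 4 * R / gamma + real K * (real K - 1) * eta)"
proof (intro ballI allI impI conjI)
  fix theta phi tau pm
  assume theta: "theta \<in> Theta" and phi: "phi \<in> Phi"
    and adm: "admissible_matching (distr M N X) K Omega fstar f gamma eta theta pm"
  let ?e = "\<lambda>x. teacher_mu K Omega fstar x - student_h K f theta a phi tau x"
  let ?G = "confident_region N K a phi tau eps"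
  let ?c = "real K * (real K - 1) * eta"
  have "0 < K" using K_pos by simp
  note hyps = prob_space.finite_measure[OF PM] X_meas \<open>0 < K\<close> Omega_meas Omega_disj fstar_meas
    f_meas[OF theta] a_meas[OF phi] f_bdd[OF theta] mu_bdd gamma_pos eps_gap adm
  have bound: "gamma / 4 * (measure (distr M N X) (mis_event N K Omega pm a phi tau eps) - ?c)
      \<le> (\<integral>w. (?e (X w))\<^sup>2 * indicator ?G (X w) \<partial>M)"
    by (rule confident_sq_error_lower_bound_distr) (use hyps in auto)
  moreover have "0 \<le> (\<integral>w. (?e (X w))\<^sup>2 * indicator ?G (X w) \<partial>M)"
    by (intro integral_nonneg_AE) auto
  ultimately show "gamma / 4 * max (measure (distr M N X) (mis_event N K Omega pm a phi tau eps) - ?c) 0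
      \<le> (\<integral>w. (?e (X w))\<^sup>2 * indicator ?G (X w) \<partial>M)"
    by (simp add: max_def)
  fix R assume R: "(\<integral>w. (?e (X w))\<^sup>2 \<partial>M) \<le> R"
  have "?G \<in> sets N" by (rule sets_confident_region) (use hyps in auto)
  then have "(\<integral>w. (?e (X w))\<^sup>2 * indicator ?G (X w) \<partial>M) \<le> (\<integral>w. (?e (X w))\<^sup>2 \<partial>M)"
    by (intro confident_sq_error_le_sq_error[OF hyps(1,2)]) (use hyps in auto)
  with R bound gamma_pos
  show "measure (distr M N X) (mis_event N K Omega pm a phi tau eps) \<le> 4 * R / gamma + ?c"
    by (simp add: field_simps)
qed

end
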